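(* Let $X$ be a uniformly convex, uniformly smooth real Banach space with normalized duality map $J$ and inverse $J^{-1}:X^*\to X$. Let $a,b\in S^*$ with $b\notin\{a,-a\}$, let $\delta(a,b)$ be the meridian arc between $a$ and $b$, and let $W(a,b)$ be the wedge engendered by it. Then $$W(a,b)^\circ=\bigcup_{c\in\delta(a,b)}\{tJ^{-1}c:t\ge 0\}=\operatorname{cone}\big(J^{-1}(\delta(a,b))\big).$$
   Context: $X^*$ is the norm dual of $X$ with pairing $\langle\cdot,\cdot\rangle$, and $S^*=\{c\in X^*:\|c\|_{X^*}=1\}$. The normalized duality map $J:X\to X^*$ is defined by $\langle Jx,x\rangle=\|Jx\|_{X^*}\|x\|=\|x\|^2=\|Jx\|_{X^*}^2$; it is a homogeneous homeomorphism. For $a,b\in S^*$ with $b\notin\{a,-a\}$, the meridian arc is $\delta(a,b)=\{(\lambda a+\mu b)/\|\lambda a+\mu b\|_{X^*}:\lambda,\mu\ge 0,\ (\lambda,\mu)\neq(0,0)\}$, i.e. the arc of $\operatorname{span}\{a,b\}\cap S^*$ joining $a$ and $b$ containing no pair of diametrically opposite points. The wedge engendered by $\delta(a,b)$ is the closed convex cone $W(a,b)=\{x\in X:\langle c,x\rangle\le 0 \text{ for all } c\in\delta(a,b)\}$. For a set $A$, $\operatorname{cone}A=\{ta:t\ge 0,a\in A\}$. The polar of a closed convex cone $K$ is $K^\circ=\{x\in X:P_Kx=0\}$, where $P_K x=\operatorname{argmin}\{\|x-k\|:k\in K\}$ is the metric projection. *)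

theory Defs
  imports "HOL-Analysis.Analysis"
begin

(*The norm dual X* of a real Banach space X is rendered as the Banach space
  of bounded linear functionals 'a =>L real; the pairing is blinfun_apply.*)

definition uniformly_convex :: "'a::real_normed_vector itself \<Rightarrow> bool" where
  "uniformly_convex _ \<longleftrightarrow>
     (\<forall>\<epsilon>>0. \<exists>\<delta>>0. \<forall>x y::'a. norm x \<le> 1 \<and> norm y \<le> 1 \<and> norm (x - y) \<ge> \<epsilon>
        \<longrightarrow> norm ((1/2) *\<^sub>R (x + y)) \<le> 1 - \<delta>)"

definition modulus_smoothness :: "'a::real_normed_vector itself \<Rightarrow> real \<Rightarrow> real" where
  "modulus_smoothness _ \<tau> =
     (SUP p \<in> {(x, y::'a). norm x = 1 \<and> norm y = 1}.
        (norm (fst p + \<tau> *\<^sub>R snd p) + norm (fst p - \<tau> *\<^sub>R snd p)) / 2 - 1)"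

definition uniformly_smooth :: "'a::real_normed_vector itself \<Rightarrow> bool" where
  "uniformly_smooth T \<longleftrightarrow>
     ((\<lambda>\<tau>. modulus_smoothness T \<tau> / \<tau>) \<longlongrightarrow> 0) (at_right 0)"

(*Normalized duality map: J x is the functional with
  <Jx,x> = norm(Jx) * norm x = norm x^2 = norm(Jx)^2 (single-valued in smooth spaces).*)
definition dualJ :: "'a::real_normed_vector \<Rightarrow> ('a \<Rightarrow>\<^sub>L real)" where
  "dualJ x = (THE c. blinfun_apply c x = norm c * norm x \<and> norm c * norm x = (norm x)^2
                    \<and> (norm x)^2 = (norm c)^2)"

definition dualJinv :: "('a::real_normed_vector \<Rightarrow>\<^sub>L real) \<Rightarrow> 'a" where
  "dualJinv c = (THE x. dualJ x = c)"

definition meridian_arc :: "('a::real_normed_vector \<Rightarrow>\<^sub>L real) \<Rightarrow> ('a \<Rightarrow>\<^sub>L real) \<Rightarrow> ('a \<Rightarrow>\<^sub>L real) set" where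
  "meridian_arc a b = {(1 / norm (l *\<^sub>R a + m *\<^sub>R b)) *\<^sub>R (l *\<^sub>R a + m *\<^sub>R b) | l m.
       l \<ge> 0 \<and> m \<ge> 0 \<and> (l, m) \<noteq> (0, 0)}"

definition wedge :: "('a::real_normed_vector \<Rightarrow>\<^sub>L real) \<Rightarrow> ('a \<Rightarrow>\<^sub>L real) \<Rightarrow> 'a set" where
  "wedge a b = {x. \<forall>c \<in> meridian_arc a b. blinfun_apply c x \<le> 0}"

definition cone_hull_of :: "'a::real_vector set \<Rightarrow> 'a set" where
  "cone_hull_of A = {t *\<^sub>R x | t x. t \<ge> 0 \<and> x \<in> A}"

definition metric_proj :: "'a::real_normed_vector set \<Rightarrow> 'a \<Rightarrow> 'a" where
  "metric_proj K x = (THE k. k \<in> K \<and> (\<forall>k'\<in>K. norm (x - k) \<le> norm (x - k')))"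

definition polar_cone :: "'a::real_normed_vector set \<Rightarrow> 'a set" where
  "polar_cone K = {x. metric_proj K x = 0}"

end

theory Submission
  imports Defs
begin

text \<open>In a uniformly smooth space the norm has a linear directional derivative at every
  \<open>y \<noteq> 0\<close>, and \<open>dualJ y\<close> is \<open>norm y\<close> times this derivative; in particular \<open>dualJ\<close> is
  single-valued and positively homogeneous. Uniform convexity yields unique nearest points in
  closed convex sets and norm-attaining functionals, so \<open>dualJ\<close> maps the unit sphere bijectively
  onto the dual unit sphere. For a closed convex cone \<open>K\<close>, the nearest point of \<open>K\<close> to \<open>x\<close> is \<open>0\<close>
  iff \<open>dualJ x\<close> is nonpositive on \<open>K\<close>. The wedge is cut out by \<open>a \<le> 0\<close> and \<open>b \<le> 0\<close>, so by
  Farkas' lemma this says that \<open>dualJ x\<close> is a nonnegative combination of \<open>a\<close> and \<open>b\<close>, i.e. a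
  nonnegative multiple of a point of the meridian arc; inverting \<open>dualJ\<close> on rays gives the
  theorem.\<close>


subsection \<open>Uniform convexity and nearest points\<close>

lemma uniformly_convexD_scaled:
  fixes e :: real
  assumes uc: "uniformly_convex TYPE('a::real_normed_vector)" and e: "e > 0"
  obtains \<delta> where "\<delta> > 0"
    and "\<And>u v :: 'a. \<And>r. r > 0 \<Longrightarrow> norm u \<le> r \<Longrightarrow> norm v \<le> r \<Longrightarrow> e * r \<le> norm (u - v) \<Longrightarrow>
           norm ((1/2) *\<^sub>R (u + v)) \<le> (1 - \<delta>) * r"
proof -
  obtain \<delta> where \<delta>: "\<delta> > 0" and unit: "\<And>x y :: 'a. norm x \<le> 1 \<Longrightarrow> norm y \<le> 1 \<Longrightarrow> e \<le> norm (x - y)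
      \<Longrightarrow> norm ((1/2) *\<^sub>R (x + y)) \<le> 1 - \<delta>"
    using uc[unfolded uniformly_convex_def, rule_format, OF e] by auto
  have "norm ((1/2) *\<^sub>R (u + v)) \<le> (1 - \<delta>) * r"
    if r: "r > 0" and "norm u \<le> r" "norm v \<le> r" "e * r \<le> norm (u - v)" for u v :: 'a and r
  proof -
    have "norm ((1/2) *\<^sub>R ((1/r) *\<^sub>R u + (1/r) *\<^sub>R v)) \<le> 1 - \<delta>"
    proof (rule unit)
      show "norm ((1/r) *\<^sub>R u) \<le> 1" "norm ((1/r) *\<^sub>R v) \<le> 1"
        using that by (simp_all add: field_simps)
      have "norm ((1/r) *\<^sub>R u - (1/r) *\<^sub>R v) = norm (u - v) / r"
        using r by (simp flip: scaleR_diff_right)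
      moreover have "e \<le> norm (u - v) / r"
        using that(4) r by (simp add: pos_le_divide_eq)
      ultimately show "e \<le> norm ((1/r) *\<^sub>R u - (1/r) *\<^sub>R v)"
        by simp
    qed
    moreover have "(1/2) *\<^sub>R ((1/r) *\<^sub>R u + (1/r) *\<^sub>R v) = (1/r) *\<^sub>R ((1/2) *\<^sub>R (u + v))"
      by (simp add: algebra_simps)
    ultimately have "norm ((1/2) *\<^sub>R (u + v)) / r \<le> 1 - \<delta>"
      using r by simp
    then show ?thesis
      using r by (simp add: pos_divide_le_eq mult_ac)
  qed
  then show thesis
    using \<delta> that by blast
qed

lemma uniformly_convex_midpoint_less:
  fixes u v :: "'a::real_normed_vector"
  assumes uc: "uniformly_convex TYPE('a)" and "norm u \<le> r" "norm v \<le> r" "u \<noteq> v"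
  shows "norm ((1/2) *\<^sub>R (u + v)) < r"
proof -
  have "0 < norm u \<or> 0 < norm v"
    using assms(4) by auto
  then have r: "r > 0"
    using assms(2,3) by linarith
  define e where "e = norm (u - v) / r"
  have "e > 0"
    using assms(4) r by (simp add: e_def)
  then obtain \<delta> where "\<delta> > 0" and bound: "\<And>u v :: 'a. \<And>r. r > 0 \<Longrightarrow> norm u \<le> r \<Longrightarrow> norm v \<le> r
      \<Longrightarrow> e * r \<le> norm (u - v) \<Longrightarrow> norm ((1/2) *\<^sub>R (u + v)) \<le> (1 - \<delta>) * r"
    using uniformly_convexD_scaled[OF uc] by blast
  have "norm ((1/2) *\<^sub>R (u + v)) \<le> (1 - \<delta>) * r"
    using bound[OF r assms(2,3)] r by (simp add: e_def)
  also have "\<dots> < r"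
    using \<open>\<delta> > 0\<close> r by simp
  finally show ?thesis .
qed

lemma infdist_le_midpoint_dist:
  assumes "convex K" "k1 \<in> K" "k2 \<in> K"
  shows "infdist x K \<le> norm ((1/2) *\<^sub>R ((x - k1) + (x - k2)))"
proof -
  have "(1/2) *\<^sub>R k1 + (1/2) *\<^sub>R k2 \<in> K"
    by (rule convexD[OF assms]) simp_all
  moreover have "(1/2) *\<^sub>R ((x - k1) + (x - k2)) = x - ((1/2) *\<^sub>R k1 + (1/2) *\<^sub>R k2)"
    by (simp add: algebra_simps flip: scaleR_add_left)
  ultimately show ?thesis
    using infdist_le[of _ K x] by (simp add: dist_norm)
qed

lemma uniformly_convex_near_points_close:
  fixes K :: "'a::real_normed_vector set"
  assumes uc: "uniformly_convex TYPE('a)" and cv: "convex K"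
    and d: "infdist x K > 0" and \<epsilon>: "\<epsilon> > 0"
  obtains \<eta> where "\<eta> > 0"
    and "\<And>k1 k2. k1 \<in> K \<Longrightarrow> k2 \<in> K \<Longrightarrow> norm (x - k1) \<le> infdist x K + \<eta> \<Longrightarrow>
           norm (x - k2) \<le> infdist x K + \<eta> \<Longrightarrow> norm (k1 - k2) < \<epsilon>"
proof -
  define d where "d = infdist x K"
  have "\<epsilon> / (2 * d) > 0"
    using d \<epsilon> by (simp add: d_def)
  then obtain \<delta> where \<delta>: "\<delta> > 0" and bound: "\<And>u v :: 'a. \<And>r. r > 0 \<Longrightarrow> norm u \<le> r \<Longrightarrow> norm v \<le> r
      \<Longrightarrow> \<epsilon> / (2 * d) * r \<le> norm (u - v) \<Longrightarrow> norm ((1/2) *\<^sub>R (u + v)) \<le> (1 - \<delta>) * r"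
    using uniformly_convexD_scaled[OF uc] by blast
  define \<eta> where "\<eta> = min \<delta> 1 * d / 2"
  have \<eta>: "\<eta> > 0" "\<eta> \<le> d" "\<eta> < \<delta> * d"
    using \<delta> d by (auto simp: \<eta>_def d_def min_def)
  have close: "norm (k1 - k2) < \<epsilon>"
    if k: "k1 \<in> K" "k2 \<in> K" "norm (x - k1) \<le> d + \<eta>" "norm (x - k2) \<le> d + \<eta>" for k1 k2
  proof (rule ccontr)
    assume "\<not> norm (k1 - k2) < \<epsilon>"
    moreover have "\<epsilon> / (2 * d) * (d + \<eta>) \<le> \<epsilon>"
      using \<eta> \<epsilon> d by (simp add: d_def field_simps)
    ultimately have far: "\<epsilon> / (2 * d) * (d + \<eta>) \<le> norm ((x - k1) - (x - k2))"
      by (simp add: norm_minus_commute)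
    have "d \<le> norm ((1/2) *\<^sub>R ((x - k1) + (x - k2)))"
      unfolding d_def by (rule infdist_le_midpoint_dist[OF cv k(1,2)])
    also have "\<dots> \<le> (1 - \<delta>) * (d + \<eta>)"
      using k \<eta> d far by (intro bound) (simp_all add: d_def)
    also have "\<dots> = d + \<eta> - \<delta> * d - \<delta> * \<eta>"
      by (simp add: algebra_simps)
    also have "\<dots> < d"
      using \<eta> \<delta> mult_pos_pos[of \<delta> \<eta>] by linarith
    finally show False
      by simp
  qed
  show thesis
    by (rule that[OF \<eta>(1)], rule close) (simp_all add: d_def)
qed

lemma exists_minimizing_sequence:
  fixes K :: "'a::real_normed_vector set"
  assumes "K \<noteq> {}"
  obtains f where "\<And>n. f n \<in> K" "\<And>n. norm (x - f n) < infdist x K + inverse (real (Suc n))"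
proof -
  have "\<exists>k\<in>K. norm (x - k) < infdist x K + inverse (real (Suc n))" for n
  proof -
    have "(INF k\<in>K. dist x k) < infdist x K + inverse (real (Suc n))"
      using infdist_notempty[OF assms, of x] by simp
    then show ?thesis
      using cINF_less_iff[OF assms bdd_below_image_dist] by (auto simp: dist_norm)
  qed
  then have "\<forall>n. \<exists>k. k \<in> K \<and> norm (x - k) < infdist x K + inverse (real (Suc n))"
    by blast
  then obtain f where "\<forall>n. f n \<in> K \<and> norm (x - f n) < infdist x K + inverse (real (Suc n))"
    by (rule choice[THEN exE])
  then show thesis
    using that by blast
qed

lemma uniformly_convex_minimizing_sequence_Cauchy:
  fixes K :: "'a::real_normed_vector set"
  assumes uc: "uniformly_convex TYPE('a)" and cv: "convex K" and d: "infdist x K > 0"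
    and f: "\<And>n. f n \<in> K" and f_near: "\<And>n. norm (x - f n) < infdist x K + inverse (real (Suc n))"
  shows "Cauchy f"
proof (rule CauchyI)
  fix \<epsilon> :: real
  assume "\<epsilon> > 0"
  then obtain \<eta> where "\<eta> > 0" and close: "\<And>k1 k2. k1 \<in> K \<Longrightarrow> k2 \<in> K \<Longrightarrow>
      norm (x - k1) \<le> infdist x K + \<eta> \<Longrightarrow> norm (x - k2) \<le> infdist x K + \<eta> \<Longrightarrow> norm (k1 - k2) < \<epsilon>"
    using uniformly_convex_near_points_close[OF uc cv d] by blast
  obtain N where N: "inverse (real (Suc N)) < \<eta>"
    using reals_Archimedean[OF \<open>\<eta> > 0\<close>] by blast
  have "norm (x - f n) \<le> infdist x K + \<eta>" if "n \<ge> N" for n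
  proof -
    have "inverse (real (Suc n)) \<le> inverse (real (Suc N))"
      using that by (simp add: field_simps)
    then show ?thesis
      using f_near[of n] N by linarith
  qed
  then show "\<exists>M. \<forall>m\<ge>M. \<forall>n\<ge>M. norm (f m - f n) < \<epsilon>"
    using close f by blast
qed

lemma uniformly_convex_nearest_point_exists:
  fixes K :: "'a::banach set"
  assumes uc: "uniformly_convex TYPE('a)" and cl: "closed K" and cv: "convex K" and ne: "K \<noteq> {}"
  obtains p where "p \<in> K" "\<And>k. k \<in> K \<Longrightarrow> norm (x - p) \<le> norm (x - k)"
proof (cases "infdist x K = 0")
  case True
  then have "x \<in> K"
    using in_closure_iff_infdist_zero[OF ne] closure_closed[OF cl] by simp
  then show thesis
    by (rule that) simp
next
  case False
  then have d: "infdist x K > 0"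
    using infdist_nonneg[of x K] by simp
  obtain f where f: "\<And>n. f n \<in> K" and f_near: "\<And>n. norm (x - f n) < infdist x K + inverse (real (Suc n))"
    using exists_minimizing_sequence[OF ne] by blast
  obtain p where p: "f \<longlonglongrightarrow> p"
    using uniformly_convex_minimizing_sequence_Cauchy[OF uc cv d f f_near]
      Cauchy_convergent_iff convergent_def by blast
  have "(\<lambda>n. norm (x - f n)) \<longlonglongrightarrow> norm (x - p)"
    using p by (intro tendsto_intros)
  then have "norm (x - p) \<le> infdist x K"
    using LIMSEQ_le[OF _ LIMSEQ_inverse_real_of_nat_add[of "infdist x K"]] f_near by (meson less_imp_le)
  show thesis
  proof (rule that)
    show "p \<in> K"
      using closed_sequentially[OF cl f p] .
    show "norm (x - p) \<le> norm (x - k)" if "k \<in> K" for k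
      using \<open>norm (x - p) \<le> infdist x K\<close> infdist_le[OF that, of x] unfolding dist_norm by linarith
  qed
qed

lemma uniformly_convex_nearest_point_unique:
  fixes K :: "'a::real_normed_vector set"
  assumes uc: "uniformly_convex TYPE('a)" and cv: "convex K"
    and p: "p \<in> K" "\<forall>k\<in>K. norm (x - p) \<le> norm (x - k)"
    and q: "q \<in> K" "\<forall>k\<in>K. norm (x - q) \<le> norm (x - k)"
  shows "p = q"
proof (rule ccontr)
  assume "p \<noteq> q"
  define r where "r = norm (x - p)"
  have "norm (x - q) = r"
    using p q by (simp add: r_def antisym)
  define w where "w = (1/2) *\<^sub>R p + (1/2) *\<^sub>R q"
  have "w \<in> K"
    unfolding w_def by (rule convexD[OF cv p(1) q(1)]) simp_all
  have mid: "x - w = (1/2) *\<^sub>R ((x - p) + (x - q))"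
    by (simp add: w_def algebra_simps flip: scaleR_add_left)
  have "r \<le> norm (x - w)"
    using p(2) \<open>w \<in> K\<close> by (simp add: r_def)
  also have "\<dots> < r"
    unfolding mid using uniformly_convex_midpoint_less[OF uc, of "x - p" r "x - q"] \<open>norm (x - q) = r\<close> \<open>p \<noteq> q\<close>
    by (simp add: r_def)
  finally show False
    by simp
qed

lemma metric_proj_eq_iff:
  fixes K :: "'a::banach set"
  assumes uc: "uniformly_convex TYPE('a)" and "closed K" "convex K" "K \<noteq> {}"
  shows "metric_proj K x = p \<longleftrightarrow> p \<in> K \<and> (\<forall>k\<in>K. norm (x - p) \<le> norm (x - k))"
proof -
  let ?nearest = "\<lambda>p. p \<in> K \<and> (\<forall>k\<in>K. norm (x - p) \<le> norm (x - k))"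
  obtain q where q: "q \<in> K" "\<And>k. k \<in> K \<Longrightarrow> norm (x - q) \<le> norm (x - k)"
    using uniformly_convex_nearest_point_exists[OF assms, of x] by blast
  have "\<exists>!p. ?nearest p"
  proof (rule ex1I)
    show "?nearest q"
      using q by blast
    show "p = q" if "?nearest p" for p
      by (rule uniformly_convex_nearest_point_unique[OF uc \<open>convex K\<close>]) (use that q in auto)
  qed
  note ex1 = this
  show ?thesis
  proof
    assume "metric_proj K x = p"
    then show "?nearest p"
      using theI'[OF ex1] by (simp add: metric_proj_def)
  next
    assume "?nearest p"
    then show "metric_proj K x = p"
      unfolding metric_proj_def by (rule the1_equality[OF ex1])
  qed
qed


subsection \<open>The directional derivative of the norm\<close>

text \<open>By convexity of \<open>t \<mapsto> norm (y + t *\<^sub>R z)\<close> the slope is nondecreasing in \<open>t > 0\<close>, so the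
  infimum below is the one-sided derivative at \<open>t = 0\<close>.\<close>

definition norm_slope :: "'a::real_normed_vector \<Rightarrow> 'a \<Rightarrow> real \<Rightarrow> real" where
  "norm_slope y z t = (norm (y + t *\<^sub>R z) - norm y) / t"

definition norm_dir_deriv :: "'a::real_normed_vector \<Rightarrow> 'a \<Rightarrow> real" where
  "norm_dir_deriv y z = (INF t\<in>{0<..}. norm_slope y z t)"

lemma abs_norm_slope_le:
  assumes "t > 0"
  shows "\<bar>norm_slope y z t\<bar> \<le> norm z"
proof -
  have "\<bar>norm (y + t *\<^sub>R z) - norm y\<bar> \<le> norm (t *\<^sub>R z)"
    using norm_triangle_ineq3[of "y + t *\<^sub>R z" y] by simp
  also have "\<dots> = norm z * t"
    using assms by simp
  finally show ?thesis
    using assms by (simp add: norm_slope_def pos_divide_le_eq)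
qed

lemma norm_slope_mono:
  assumes "0 < s" "s \<le> t"
  shows "norm_slope y z s \<le> norm_slope y z t"
proof -
  have t: "t > 0"
    using assms by simp
  have "y + s *\<^sub>R z = (1 - s/t) *\<^sub>R y + (s/t) *\<^sub>R (y + t *\<^sub>R z)"
    using t by (simp add: algebra_simps)
  then have "norm (y + s *\<^sub>R z) \<le> (1 - s/t) * norm y + (s/t) * norm (y + t *\<^sub>R z)"
    using assms norm_triangle_ineq[of "(1 - s/t) *\<^sub>R y" "(s/t) *\<^sub>R (y + t *\<^sub>R z)"] by simp
  then have "norm (y + s *\<^sub>R z) - norm y \<le> (s/t) * (norm (y + t *\<^sub>R z) - norm y)"
    by (simp add: algebra_simps)
  then show ?thesis
    using assms t by (simp add: norm_slope_def field_simps)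
qed

lemma bdd_below_norm_slope: "bdd_below (norm_slope y z ` {0<..})"
proof (rule bdd_belowI2)
  show "- norm z \<le> norm_slope y z t" if "t \<in> {0<..}" for t
    using abs_norm_slope_le[of t y z] that by simp
qed

lemma norm_dir_deriv_le_slope: "t > 0 \<Longrightarrow> norm_dir_deriv y z \<le> norm_slope y z t"
  unfolding norm_dir_deriv_def by (rule cINF_lower[OF bdd_below_norm_slope]) simp

lemma norm_dir_deriv_greatest: "(\<And>t. t > 0 \<Longrightarrow> L \<le> norm_slope y z t) \<Longrightarrow> L \<le> norm_dir_deriv y z"
  unfolding norm_dir_deriv_def by (rule cINF_greatest) auto

lemma abs_norm_dir_deriv_le: "\<bar>norm_dir_deriv y z\<bar> \<le> norm z"
proof -
  have "norm_dir_deriv y z \<le> norm z"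
    using norm_dir_deriv_le_slope[of 1 y z] abs_norm_slope_le[of 1 y z] by simp
  moreover have "- norm z \<le> norm_dir_deriv y z"
  proof (rule norm_dir_deriv_greatest)
    show "- norm z \<le> norm_slope y z t" if "t > 0" for t
      using abs_norm_slope_le[OF that, of y z] by simp
  qed
  ultimately show ?thesis
    by simp
qed

lemma norm_dir_deriv_self: "norm_dir_deriv y y = norm y"
proof -
  have slope: "norm_slope y y t = norm y" if "t > 0" for t
  proof -
    have "y + t *\<^sub>R y = (1 + t) *\<^sub>R y"
      by (simp add: algebra_simps)
    then have "norm (y + t *\<^sub>R y) = (1 + t) * norm y"
      using that by simp
    then show ?thesis
      using that by (simp add: norm_slope_def field_simps)
  qed
  have "norm_dir_deriv y y \<le> norm y"
    using norm_dir_deriv_le_slope[of 1 y y] slope[of 1] by simp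
  moreover have "norm y \<le> norm_dir_deriv y y"
    using slope by (intro norm_dir_deriv_greatest) simp
  ultimately show ?thesis
    by simp
qed

lemma norm_dir_deriv_zero [simp]: "norm_dir_deriv y 0 = 0"
  using abs_norm_dir_deriv_le[of y 0] by simp

lemma norm_slope_add_le:
  assumes "t > 0"
  shows "norm_slope y (z1 + z2) t \<le> norm_slope y z1 (2 * t) + norm_slope y z2 (2 * t)"
proof -
  let ?n = "norm y" and ?A = "norm (y + (2 * t) *\<^sub>R z1)" and ?B = "norm (y + (2 * t) *\<^sub>R z2)"
  have "y + t *\<^sub>R (z1 + z2) = (1/2) *\<^sub>R (y + (2 * t) *\<^sub>R z1) + (1/2) *\<^sub>R (y + (2 * t) *\<^sub>R z2)"
    by (simp add: algebra_simps flip: scaleR_add_left)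
  then have "norm (y + t *\<^sub>R (z1 + z2)) \<le> (?A + ?B) / 2"
    using norm_triangle_ineq[of "(1/2) *\<^sub>R (y + (2 * t) *\<^sub>R z1)" "(1/2) *\<^sub>R (y + (2 * t) *\<^sub>R z2)"] by simp
  then have "(norm (y + t *\<^sub>R (z1 + z2)) - ?n) / t \<le> ((?A - ?n) + (?B - ?n)) / 2 / t"
    using assms by (intro divide_right_mono) simp_all
  also have "\<dots> = (?A - ?n) / (2 * t) + (?B - ?n) / (2 * t)"
    by (simp only: add_divide_distrib divide_divide_eq_left)
  finally show ?thesis
    unfolding norm_slope_def .
qed

lemma norm_dir_deriv_add_le: "norm_dir_deriv y (z1 + z2) \<le> norm_dir_deriv y z1 + norm_dir_deriv y z2"
proof -
  have bound: "norm_dir_deriv y (z1 + z2) \<le> norm_slope y z1 s + norm_slope y z2 t"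
    if "s > 0" "t > 0" for s t
  proof -
    define r where "r = min s t / 2"
    have r: "r > 0" "2 * r \<le> s" "2 * r \<le> t"
      using that by (simp_all add: r_def)
    have "norm_dir_deriv y (z1 + z2) \<le> norm_slope y (z1 + z2) r"
      using r by (intro norm_dir_deriv_le_slope)
    also have "\<dots> \<le> norm_slope y z1 (2 * r) + norm_slope y z2 (2 * r)"
      using r(1) by (rule norm_slope_add_le)
    also have "\<dots> \<le> norm_slope y z1 s + norm_slope y z2 t"
      using r by (intro add_mono norm_slope_mono) simp_all
    finally show ?thesis .
  qed
  have bound_z2: "norm_dir_deriv y (z1 + z2) - norm_slope y z1 s \<le> norm_dir_deriv y z2" if "s > 0" for s
  proof (rule norm_dir_deriv_greatest)
    show "norm_dir_deriv y (z1 + z2) - norm_slope y z1 s \<le> norm_slope y z2 t" if "t > 0" for t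
      using bound[OF \<open>s > 0\<close> that] by linarith
  qed
  have "norm_dir_deriv y (z1 + z2) - norm_dir_deriv y z2 \<le> norm_dir_deriv y z1"
  proof (rule norm_dir_deriv_greatest)
    show "norm_dir_deriv y (z1 + z2) - norm_dir_deriv y z2 \<le> norm_slope y z1 s" if "s > 0" for s
      using bound_z2[OF that] by linarith
  qed
  then show ?thesis
    by linarith
qed

lemma modulus_smoothness_ge:
  fixes u v :: "'a::real_normed_vector"
  assumes "norm u = 1" "norm v = 1"
  shows "(norm (u + \<tau> *\<^sub>R v) + norm (u - \<tau> *\<^sub>R v)) / 2 - 1 \<le> modulus_smoothness TYPE('a) \<tau>"
  unfolding modulus_smoothness_def
proof (rule cSUP_upper2[where x = "(u, v)"])
  show "(u, v) \<in> {(x, y). norm x = 1 \<and> norm y = 1}"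
    using assms by simp
  show "bdd_above ((\<lambda>p. (norm (fst p + \<tau> *\<^sub>R snd p) + norm (fst p - \<tau> *\<^sub>R snd p)) / 2 - 1) `
      {(x, y::'a). norm x = 1 \<and> norm y = 1})"
  proof (rule bdd_aboveI2[where M = "\<bar>\<tau>\<bar>"], clarify)
    fix x y :: 'a
    assume "norm x = 1" "norm y = 1"
    then have "norm (x + \<tau> *\<^sub>R y) \<le> 1 + \<bar>\<tau>\<bar>" "norm (x - \<tau> *\<^sub>R y) \<le> 1 + \<bar>\<tau>\<bar>"
      using norm_triangle_ineq[of x "\<tau> *\<^sub>R y"] norm_triangle_ineq4[of x "\<tau> *\<^sub>R y"] by simp_all
    then show "(norm (fst (x, y) + \<tau> *\<^sub>R snd (x, y)) + norm (fst (x, y) - \<tau> *\<^sub>R snd (x, y))) / 2 - 1 \<le> \<bar>\<tau>\<bar>"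
      by (simp add: field_simps)
  qed
qed simp

lemma norm_slope_add_neg_le:
  fixes y z :: "'a::real_normed_vector"
  assumes y: "y \<noteq> 0" and z: "z \<noteq> 0" and \<tau>: "\<tau> > 0"
  defines "t \<equiv> \<tau> * norm y / norm z"
  shows "norm_slope y z t + norm_slope y (- z) t \<le> 2 * norm z * (modulus_smoothness TYPE('a) \<tau> / \<tau>)"
proof -
  define u where "u = (1 / norm y) *\<^sub>R y"
  define v where "v = (1 / norm z) *\<^sub>R z"
  have "norm u = 1" "norm v = 1"
    using y z by (simp_all add: u_def v_def)
  from modulus_smoothness_ge[OF this, of \<tau>]
  have \<rho>: "norm (u + \<tau> *\<^sub>R v) + norm (u - \<tau> *\<^sub>R v) - 2 \<le> 2 * modulus_smoothness TYPE('a) \<tau>"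
    by (simp add: field_simps)
  have "y + t *\<^sub>R z = norm y *\<^sub>R (u + \<tau> *\<^sub>R v)" "y + t *\<^sub>R (- z) = norm y *\<^sub>R (u - \<tau> *\<^sub>R v)"
    using y z by (simp_all add: u_def v_def t_def scaleR_add_right scaleR_diff_right)
  then have "norm (y + t *\<^sub>R z) = norm y * norm (u + \<tau> *\<^sub>R v)"
    "norm (y + t *\<^sub>R (- z)) = norm y * norm (u - \<tau> *\<^sub>R v)"
    by simp_all
  then have "norm_slope y z t + norm_slope y (- z) t
      = norm z * (norm (u + \<tau> *\<^sub>R v) + norm (u - \<tau> *\<^sub>R v) - 2) / \<tau>"
    unfolding norm_slope_def using y z \<tau> by (simp add: t_def field_simps)
  also have "\<dots> \<le> norm z * (2 * modulus_smoothness TYPE('a) \<tau>) / \<tau>"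
    using \<rho> \<tau> by (intro divide_right_mono mult_left_mono) simp_all
  also have "\<dots> = 2 * norm z * (modulus_smoothness TYPE('a) \<tau> / \<tau>)"
    by simp
  finally show ?thesis .
qed

lemma norm_dir_deriv_add_neg_le:
  fixes y :: "'a::real_normed_vector"
  assumes us: "uniformly_smooth TYPE('a)" and y: "y \<noteq> 0"
  shows "norm_dir_deriv y z + norm_dir_deriv y (- z) \<le> 0"
proof (cases "z = 0")
  case False
  let ?bound = "\<lambda>\<tau>. 2 * norm z * (modulus_smoothness TYPE('a) \<tau> / \<tau>)"
  have "(?bound \<longlongrightarrow> 0) (at_right 0)"
    using us unfolding uniformly_smooth_def by (rule tendsto_mult_right_zero)
  moreover have "\<forall>\<^sub>F \<tau> in at_right 0. norm_dir_deriv y z + norm_dir_deriv y (- z) \<le> ?bound \<tau>"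
    using eventually_at_right_less[of 0]
  proof eventually_elim
    case (elim \<tau>)
    define t where "t = \<tau> * norm y / norm z"
    have "t > 0"
      using elim y False by (simp add: t_def)
    then have "norm_dir_deriv y z + norm_dir_deriv y (- z) \<le> norm_slope y z t + norm_slope y (- z) t"
      by (intro add_mono norm_dir_deriv_le_slope)
    also have "\<dots> \<le> ?bound \<tau>"
      unfolding t_def using y False elim by (rule norm_slope_add_neg_le)
    finally show ?case .
  qed
  ultimately show ?thesis
    by (rule tendsto_lowerbound) simp
qed simp

lemma norm_dir_deriv_uminus:
  assumes "uniformly_smooth TYPE('a::real_normed_vector)" and "(y::'a) \<noteq> 0"
  shows "norm_dir_deriv y (- z) = - norm_dir_deriv y z"
  using norm_dir_deriv_add_neg_le[OF assms, of z] norm_dir_deriv_add_le[of y z "- z"] by simp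

lemma norm_dir_deriv_add:
  assumes "uniformly_smooth TYPE('a::real_normed_vector)" and "(y::'a) \<noteq> 0"
  shows "norm_dir_deriv y (z1 + z2) = norm_dir_deriv y z1 + norm_dir_deriv y z2"
  using norm_dir_deriv_add_le[of y z1 z2] norm_dir_deriv_add_le[of y "- z1" "- z2"]
  unfolding minus_add_distrib[symmetric] norm_dir_deriv_uminus[OF assms] by linarith

lemma norm_dir_deriv_scaleR_pos:
  assumes s: "s > 0"
  shows "norm_dir_deriv y (s *\<^sub>R z) = s * norm_dir_deriv y z"
proof -
  have slope: "norm_slope y (s *\<^sub>R z) t = s * norm_slope y z (s * t)" if "t > 0" for t
    using s that by (simp add: norm_slope_def field_simps)
  have "norm_dir_deriv y (s *\<^sub>R z) / s \<le> norm_dir_deriv y z"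
  proof (rule norm_dir_deriv_greatest)
    fix t :: real
    assume "t > 0"
    then have "norm_dir_deriv y (s *\<^sub>R z) \<le> s * norm_slope y z t"
      using norm_dir_deriv_le_slope[of "t / s" y "s *\<^sub>R z"] slope[of "t / s"] s by simp
    then show "norm_dir_deriv y (s *\<^sub>R z) / s \<le> norm_slope y z t"
      using s by (simp add: pos_divide_le_eq mult.commute)
  qed
  moreover have "s * norm_dir_deriv y z \<le> norm_dir_deriv y (s *\<^sub>R z)"
  proof (rule norm_dir_deriv_greatest)
    fix t :: real
    assume "t > 0"
    then show "s * norm_dir_deriv y z \<le> norm_slope y (s *\<^sub>R z) t"
      using s slope norm_dir_deriv_le_slope[of "s * t" y z] by (simp add: mult_left_mono)
  qed
  ultimately show ?thesis
    using s by (simp add: pos_divide_le_eq mult.commute)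
qed

lemma norm_dir_deriv_scaleR:
  assumes "uniformly_smooth TYPE('a::real_normed_vector)" and "(y::'a) \<noteq> 0"
  shows "norm_dir_deriv y (s *\<^sub>R z) = s * norm_dir_deriv y z"
proof -
  consider "s > 0" | "s = 0" | "s < 0"
    by linarith
  then show ?thesis
  proof cases
    case 3
    have "norm_dir_deriv y (s *\<^sub>R z) = norm_dir_deriv y (- ((- s) *\<^sub>R z))"
      by simp
    also have "\<dots> = - norm_dir_deriv y ((- s) *\<^sub>R z)"
      by (rule norm_dir_deriv_uminus[OF assms])
    also have "\<dots> = s * norm_dir_deriv y z"
      using 3 norm_dir_deriv_scaleR_pos[of "- s" y z] by simp
    finally show ?thesis .
  qed (simp_all add: norm_dir_deriv_scaleR_pos)
qed

lemma bounded_linear_norm_dir_deriv: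
  assumes "uniformly_smooth TYPE('a::real_normed_vector)" and "(y::'a) \<noteq> 0"
  shows "bounded_linear (\<lambda>z. norm y * norm_dir_deriv y z)"
proof (rule bounded_linear_intro[where K = "norm y"])
  show "norm y * norm_dir_deriv y (z1 + z2) = norm y * norm_dir_deriv y z1 + norm y * norm_dir_deriv y z2"
    for z1 z2
    by (simp add: norm_dir_deriv_add[OF assms] distrib_left)
  show "norm y * norm_dir_deriv y (r *\<^sub>R z) = r *\<^sub>R (norm y * norm_dir_deriv y z)" for r z
    by (simp add: norm_dir_deriv_scaleR[OF assms])
  show "norm (norm y * norm_dir_deriv y z) \<le> norm z * norm y" for z
    using abs_norm_dir_deriv_le[of y z] by (simp add: abs_mult mult_left_mono mult.commute)
qed


subsection \<open>The duality map of a uniformly smooth space\<close>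

lemma le_norm_dir_deriv_if_duality:
  assumes y: "y \<noteq> 0" and c: "blinfun_apply c y = (norm y)\<^sup>2" "norm c \<le> norm y"
  shows "blinfun_apply c z \<le> norm y * norm_dir_deriv y z"
proof -
  have "blinfun_apply c z / norm y \<le> norm_dir_deriv y z"
  proof (rule norm_dir_deriv_greatest)
    fix t :: real
    assume t: "t > 0"
    have "(norm y)\<^sup>2 + t * blinfun_apply c z = blinfun_apply c (y + t *\<^sub>R z)"
      using c by (simp add: blinfun.add_right blinfun.scaleR_right)
    also have "\<dots> \<le> norm c * norm (y + t *\<^sub>R z)"
      using norm_blinfun[of c "y + t *\<^sub>R z"] by simp
    also have "\<dots> \<le> norm y * norm (y + t *\<^sub>R z)"
      using c by (simp add: mult_right_mono)
    finally have "t * blinfun_apply c z \<le> norm y * (norm (y + t *\<^sub>R z) - norm y)"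
      by (simp add: power2_eq_square algebra_simps)
    then show "blinfun_apply c z / norm y \<le> norm_slope y z t"
      using t y by (simp add: norm_slope_def field_simps)
  qed
  then show ?thesis
    using y by (simp add: pos_divide_le_eq mult.commute)
qed

lemma duality_eq_norm_dir_deriv:
  assumes us: "uniformly_smooth TYPE('a::real_normed_vector)" and y: "(y::'a) \<noteq> 0"
    and c: "blinfun_apply c y = (norm y)\<^sup>2" "norm c \<le> norm y"
  shows "blinfun_apply c z = norm y * norm_dir_deriv y z"
  using le_norm_dir_deriv_if_duality[OF y c, of z] le_norm_dir_deriv_if_duality[OF y c, of "- z"]
  by (simp add: blinfun.minus_right norm_dir_deriv_uminus[OF us y])

lemma norm_dir_deriv_functional:
  assumes us: "uniformly_smooth TYPE('a::real_normed_vector)" and y: "(y::'a) \<noteq> 0"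
  obtains J where "\<And>z. blinfun_apply J z = norm y * norm_dir_deriv y z"
    "blinfun_apply J y = (norm y)\<^sup>2" "norm J = norm y"
proof -
  define J where "J = Blinfun (\<lambda>z. norm y * norm_dir_deriv y z)"
  have J_apply: "blinfun_apply J z = norm y * norm_dir_deriv y z" for z
    using bounded_linear_Blinfun_apply[OF bounded_linear_norm_dir_deriv[OF us y]] by (simp add: J_def)
  have "norm J \<le> norm y"
    using abs_norm_dir_deriv_le[of y] by (intro norm_blinfun_bound) (simp_all add: J_apply abs_mult mult_left_mono)
  moreover have "norm y * norm y \<le> norm J * norm y"
    using norm_blinfun[of J y] by (simp add: J_apply norm_dir_deriv_self)
  ultimately have "norm J = norm y"
    using y by simp
  then show thesis
    by (intro that[of J]) (simp_all add: J_apply norm_dir_deriv_self power2_eq_square)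
qed

lemma duality_functional_unique:
  assumes us: "uniformly_smooth TYPE('a::real_normed_vector)"
    and c: "blinfun_apply c y = (norm (y::'a))\<^sup>2" "norm c = norm y"
    and c': "blinfun_apply c' y = (norm y)\<^sup>2" "norm c' = norm y"
  shows "c = c'"
proof (cases "y = 0")
  case False
  show ?thesis
    using c c' by (intro blinfun_eqI) (simp add: duality_eq_norm_dir_deriv[OF us False])
qed (use c c' in simp)

lemma dualJ_eq_iff:
  fixes y :: "'a::real_normed_vector"
  assumes us: "uniformly_smooth TYPE('a)"
  shows "dualJ y = c \<longleftrightarrow> blinfun_apply c y = (norm y)\<^sup>2 \<and> norm c = norm y"
proof -
  let ?P = "\<lambda>c::'a \<Rightarrow>\<^sub>L real. blinfun_apply c y = norm c * norm y \<and> norm c * norm y = (norm y)\<^sup>2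
      \<and> (norm y)\<^sup>2 = (norm c)\<^sup>2"
  have P_iff: "?P c \<longleftrightarrow> blinfun_apply c y = (norm y)\<^sup>2 \<and> norm c = norm y" for c
  proof
    assume "?P c"
    then have "norm c = norm y"
      using power2_eq_iff_nonneg[of "norm c" "norm y"] by simp
    then show "blinfun_apply c y = (norm y)\<^sup>2 \<and> norm c = norm y"
      using \<open>?P c\<close> by (simp add: power2_eq_square)
  qed (simp add: power2_eq_square)
  have "\<exists>c. ?P c"
  proof (cases "y = 0")
    case False
    then show ?thesis
      using norm_dir_deriv_functional[OF us False] P_iff by metis
  qed (auto simp: P_iff)
  moreover have "c = c'" if "?P c" "?P c'" for c c'
    using that duality_functional_unique[OF us] unfolding P_iff by blast
  ultimately have ex1: "\<exists>!c. ?P c"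
    by blast
  show ?thesis
  proof
    assume "dualJ y = c"
    have "?P (dualJ y)"
      unfolding dualJ_def by (rule theI'[OF ex1])
    then show "blinfun_apply c y = (norm y)\<^sup>2 \<and> norm c = norm y"
      by (simp only: \<open>dualJ y = c\<close> P_iff)
  next
    assume "blinfun_apply c y = (norm y)\<^sup>2 \<and> norm c = norm y"
    then have "?P c"
      by (rule P_iff[THEN iffD2])
    then show "dualJ y = c"
      unfolding dualJ_def by (rule the1_equality[OF ex1])
  qed
qed

lemma dualJ_apply_self:
  assumes "uniformly_smooth TYPE('a::real_normed_vector)"
  shows "blinfun_apply (dualJ y) y = (norm (y::'a))\<^sup>2"
  using dualJ_eq_iff[OF assms, of y "dualJ y"] by simp

lemma norm_dualJ:
  assumes "uniformly_smooth TYPE('a::real_normed_vector)"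
  shows "norm (dualJ (y::'a)) = norm y"
  using dualJ_eq_iff[OF assms, of y "dualJ y"] by simp

lemma dualJ_apply:
  assumes "uniformly_smooth TYPE('a::real_normed_vector)" and "(y::'a) \<noteq> 0"
  shows "blinfun_apply (dualJ y) z = norm y * norm_dir_deriv y z"
  using assms by (intro duality_eq_norm_dir_deriv) (simp_all add: dualJ_apply_self norm_dualJ)

lemma dualJ_scaleR:
  fixes y :: "'a::real_normed_vector"
  assumes us: "uniformly_smooth TYPE('a)" and t: "t \<ge> 0"
  shows "dualJ (t *\<^sub>R y) = t *\<^sub>R dualJ y"
  using t by (simp add: dualJ_eq_iff[OF us] dualJ_apply_self[OF us] norm_dualJ[OF us]
      blinfun.scaleR_left blinfun.scaleR_right power2_eq_square)

lemma dualJ_nonpos_if_norm_le: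
  fixes x k :: "'a::real_normed_vector"
  assumes us: "uniformly_smooth TYPE('a)" and le: "\<And>t. t > 0 \<Longrightarrow> norm x \<le> norm (x - t *\<^sub>R k)"
  shows "blinfun_apply (dualJ x) k \<le> 0"
proof (cases "x = 0")
  case True
  then show ?thesis
    using norm_dualJ[OF us, of x] by simp
next
  case False
  have "0 \<le> norm_dir_deriv x (- k)"
  proof (rule norm_dir_deriv_greatest)
    show "0 \<le> norm_slope x (- k) t" if "t > 0" for t
      using le[OF that] that by (simp add: norm_slope_def)
  qed
  then show ?thesis
    by (simp add: dualJ_apply[OF us False] norm_dir_deriv_uminus[OF us False] mult_nonneg_nonpos)
qed


subsection \<open>Bounded linear functionals\<close>

lemma closed_blinfun_vimage: "closed S \<Longrightarrow> closed (blinfun_apply c -` S)"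
  by (intro continuous_closed_vimage linear_continuous_at blinfun.bounded_linear_right)

lemma convex_blinfun_vimage: "convex S \<Longrightarrow> convex (blinfun_apply c -` S)"
  by (intro convex_linear_vimage bounded_linear.linear[OF blinfun.bounded_linear_right])

lemma blinfun_exists_apply_eq_1:
  fixes c :: "'a::real_normed_vector \<Rightarrow>\<^sub>L real"
  assumes "c \<noteq> 0"
  obtains p where "blinfun_apply c p = 1"
proof -
  obtain y where y: "blinfun_apply c y \<noteq> 0"
    using assms blinfun_eqI[of c 0] by auto
  show thesis
    using y by (intro that[of "(1 / blinfun_apply c y) *\<^sub>R y"]) (simp add: blinfun.scaleR_right)
qed

lemma blinfun_exists_kernel_point:
  fixes a b :: "'a::real_normed_vector \<Rightarrow>\<^sub>L real"
  assumes "a \<noteq> 0" and indep: "\<And>s. b \<noteq> s *\<^sub>R a"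
  obtains v where "blinfun_apply a v = 0" "blinfun_apply b v = 1"
proof -
  obtain p where p: "blinfun_apply a p = 1"
    using blinfun_exists_apply_eq_1[OF \<open>a \<noteq> 0\<close>] .
  have "\<exists>q. blinfun_apply a q = 0 \<and> blinfun_apply b q \<noteq> 0"
  proof (rule ccontr)
    assume "\<nexists>q. blinfun_apply a q = 0 \<and> blinfun_apply b q \<noteq> 0"
    then have ker: "blinfun_apply b q = 0" if "blinfun_apply a q = 0" for q
      using that by blast
    have "b = blinfun_apply b p *\<^sub>R a"
    proof (rule blinfun_eqI)
      fix x
      have "blinfun_apply a (x - blinfun_apply a x *\<^sub>R p) = 0"
        using p by (simp add: blinfun.diff_right blinfun.scaleR_right)
      then have "blinfun_apply b (x - blinfun_apply a x *\<^sub>R p) = 0"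
        by (rule ker)
      then show "blinfun_apply b x = blinfun_apply (blinfun_apply b p *\<^sub>R a) x"
        by (simp add: blinfun.diff_right blinfun.scaleR_right blinfun.scaleR_left mult.commute)
    qed
    then show False
      using indep by blast
  qed
  then obtain q where q: "blinfun_apply a q = 0" "blinfun_apply b q \<noteq> 0"
    by blast
  show thesis
    using q by (intro that[of "(1 / blinfun_apply b q) *\<^sub>R q"]) (simp_all add: blinfun.scaleR_right)
qed

lemma unit_neq_scaleR:
  fixes a b :: "'a::real_normed_vector"
  assumes "norm a = 1" "norm b = 1" "b \<noteq> a" "b \<noteq> - a"
  shows "b \<noteq> s *\<^sub>R a"
proof
  assume "b = s *\<^sub>R a"
  then have "s = 1 \<or> s = -1"
    using assms(1,2) by (auto simp: abs_if split: if_splits)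
  then show False
    using \<open>b = s *\<^sub>R a\<close> assms(3,4) by auto
qed

lemma scaleR_add_scaleR_neq_0:
  fixes a b :: "'a::real_vector"
  assumes "a \<noteq> 0" "\<And>s. b \<noteq> s *\<^sub>R a" and "(l, m) \<noteq> (0, 0)"
  shows "l *\<^sub>R a + m *\<^sub>R b \<noteq> 0"
proof
  assume sum: "l *\<^sub>R a + m *\<^sub>R b = 0"
  show False
  proof (cases "m = 0")
    case True
    then show False
      using sum assms(1,3) by simp
  next
    case False
    have "m *\<^sub>R b = - (l *\<^sub>R a)"
      using sum by (simp add: eq_neg_iff_add_eq_0 add.commute)
    then have "(1 / m) *\<^sub>R (m *\<^sub>R b) = (1 / m) *\<^sub>R (- (l *\<^sub>R a))"
      by simp
    then have "b = (- l / m) *\<^sub>R a"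
      using False by (simp add: divide_inverse)
    then show False
      using assms(2) by blast
  qed
qed

lemma farkas_two_functionals:
  fixes a b f :: "'a::real_normed_vector \<Rightarrow>\<^sub>L real"
  assumes ab: "\<And>s. a \<noteq> s *\<^sub>R b" and ba: "\<And>s. b \<noteq> s *\<^sub>R a"
  shows "(\<forall>k. blinfun_apply a k \<le> 0 \<longrightarrow> blinfun_apply b k \<le> 0 \<longrightarrow> blinfun_apply f k \<le> 0)
    \<longleftrightarrow> (\<exists>l m. l \<ge> 0 \<and> m \<ge> 0 \<and> f = l *\<^sub>R a + m *\<^sub>R b)"
proof
  assume nonpos: "\<forall>k. blinfun_apply a k \<le> 0 \<longrightarrow> blinfun_apply b k \<le> 0 \<longrightarrow> blinfun_apply f k \<le> 0"
  have "a \<noteq> 0" "b \<noteq> 0"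
    using ab[of 0] ba[of 0] by simp_all
  obtain u where u: "blinfun_apply a u = 1" "blinfun_apply b u = 0"
    using blinfun_exists_kernel_point[OF \<open>b \<noteq> 0\<close> ab] by metis
  obtain v where v: "blinfun_apply a v = 0" "blinfun_apply b v = 1"
    using blinfun_exists_kernel_point[OF \<open>a \<noteq> 0\<close> ba] by metis
  have f_ker: "blinfun_apply f k = 0" if "blinfun_apply a k = 0" "blinfun_apply b k = 0" for k
    using spec[OF nonpos, of k] spec[OF nonpos, of "- k"] that by (simp add: blinfun.minus_right)
  have "f = blinfun_apply f u *\<^sub>R a + blinfun_apply f v *\<^sub>R b"
  proof (rule blinfun_eqI)
    fix x
    let ?k = "x - blinfun_apply a x *\<^sub>R u - blinfun_apply b x *\<^sub>R v"
    have "blinfun_apply f ?k = 0"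
      using u v by (intro f_ker) (simp_all add: blinfun.diff_right blinfun.scaleR_right)
    then have "blinfun_apply f x = blinfun_apply a x * blinfun_apply f u + blinfun_apply b x * blinfun_apply f v"
      by (simp add: blinfun.diff_right blinfun.scaleR_right)
    then show "blinfun_apply f x = blinfun_apply (blinfun_apply f u *\<^sub>R a + blinfun_apply f v *\<^sub>R b) x"
      by (simp add: blinfun.add_left blinfun.scaleR_left mult.commute)
  qed
  moreover have "blinfun_apply f u \<ge> 0" "blinfun_apply f v \<ge> 0"
    using spec[OF nonpos, of "- u"] spec[OF nonpos, of "- v"] u v by (simp_all add: blinfun.minus_right)
  ultimately show "\<exists>l m. l \<ge> 0 \<and> m \<ge> 0 \<and> f = l *\<^sub>R a + m *\<^sub>R b"
    by blast
qed (auto simp: blinfun.add_left blinfun.scaleR_left add_nonpos_nonpos mult_nonneg_nonpos)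

lemma norm_blinfun_mult_le_if_least:
  fixes c :: "'a::real_normed_vector \<Rightarrow>\<^sub>L real"
  assumes ck: "1 \<le> blinfun_apply c k" and least: "\<And>y. 1 \<le> blinfun_apply c y \<Longrightarrow> norm k \<le> norm y"
  shows "norm c * norm k \<le> 1"
proof -
  have k_pos: "norm k > 0"
    using ck by auto
  have bound: "norm k * blinfun_apply c y \<le> norm y" for y
  proof (cases "blinfun_apply c y > 0")
    case True
    then have "norm k \<le> norm ((1 / blinfun_apply c y) *\<^sub>R y)"
      by (intro least) (simp add: blinfun.scaleR_right)
    then show ?thesis
      using True by (simp add: pos_le_divide_eq mult.commute)
  next
    case False
    then have "norm k * blinfun_apply c y \<le> 0"
      by (simp add: mult_nonneg_nonpos)
    then show ?thesis
      using norm_ge_zero[of y] by linarith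
  qed
  have "norm c \<le> 1 / norm k"
  proof (rule norm_blinfun_bound)
    show "norm (blinfun_apply c y) \<le> 1 / norm k * norm y" for y
      using bound[of y] bound[of "- y"] k_pos
      by (simp add: blinfun.minus_right abs_le_iff pos_le_divide_eq mult.commute)
  qed simp
  then show ?thesis
    using k_pos by (simp add: pos_le_divide_eq)
qed


subsection \<open>Inverting the duality map\<close>

text \<open>The norming point is the point of least norm of the closed convex set \<open>{y. 1 \<le> c y}\<close>.\<close>

lemma uniformly_convex_norm_attained:
  fixes c :: "'a::banach \<Rightarrow>\<^sub>L real"
  assumes uc: "uniformly_convex TYPE('a)" and nc: "norm c = 1"
  obtains x where "norm x = 1" "blinfun_apply c x = 1"
proof -
  define K where "K = blinfun_apply c -` {1..}"
  have "closed K" "convex K"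
    unfolding K_def by (simp_all add: closed_blinfun_vimage convex_blinfun_vimage)
  moreover have "c \<noteq> 0"
    using nc by auto
  then obtain p where "blinfun_apply c p = 1"
    by (rule blinfun_exists_apply_eq_1)
  then have "K \<noteq> {}"
    by (auto simp: K_def)
  ultimately obtain k where "k \<in> K" and least: "\<And>y. y \<in> K \<Longrightarrow> norm k \<le> norm y"
    using uniformly_convex_nearest_point_exists[OF uc, of K 0] by auto
  then have ck: "1 \<le> blinfun_apply c k"
    by (simp add: K_def)
  have "norm k \<le> 1"
    using norm_blinfun_mult_le_if_least[OF ck] least nc by (simp add: K_def)
  moreover have "blinfun_apply c k \<le> norm k"
    using norm_blinfun[of c k] nc by simp
  ultimately show thesis
    using ck by (intro that[of k]) simp_all
qed

lemma dualJ_ex1: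
  fixes c :: "'a::banach \<Rightarrow>\<^sub>L real"
  assumes uc: "uniformly_convex TYPE('a)" and us: "uniformly_smooth TYPE('a)" and nc: "norm c = 1"
  shows "\<exists>!x. dualJ x = c"
proof -
  obtain x where x: "norm x = 1" "blinfun_apply c x = 1"
    using uniformly_convex_norm_attained[OF uc nc] .
  have "dualJ x = c"
    using x nc by (simp add: dualJ_eq_iff[OF us])
  moreover have "y = x" if "dualJ y = c" for y
  proof (rule ccontr)
    assume "y \<noteq> x"
    have y: "norm y = 1" "blinfun_apply c y = 1"
      using that nc by (simp_all add: dualJ_eq_iff[OF us])
    have "1 = blinfun_apply c ((1/2) *\<^sub>R (x + y))"
      using x y by (simp add: blinfun.scaleR_right blinfun.add_right)
    also have "\<dots> \<le> norm ((1/2) *\<^sub>R (x + y))"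
      using norm_blinfun[of c "(1/2) *\<^sub>R (x + y)"] nc by simp
    also have "\<dots> < 1"
      using uniformly_convex_midpoint_less[OF uc, of x 1 y] x y \<open>y \<noteq> x\<close> by simp
    finally show False
      by simp
  qed
  ultimately show ?thesis
    by blast
qed

lemma dualJ_dualJinv:
  fixes c :: "'a::banach \<Rightarrow>\<^sub>L real"
  assumes "uniformly_convex TYPE('a)" "uniformly_smooth TYPE('a)" "norm c = 1"
  shows "dualJ (dualJinv c) = c"
  unfolding dualJinv_def by (rule theI'[OF dualJ_ex1[OF assms]])

lemma dualJinv_eqI:
  fixes c :: "'a::banach \<Rightarrow>\<^sub>L real"
  assumes "uniformly_convex TYPE('a)" "uniformly_smooth TYPE('a)" "norm c = 1" and "dualJ x = c"
  shows "dualJinv c = x"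
  unfolding dualJinv_def by (rule the1_equality[OF dualJ_ex1[OF assms(1-3)] assms(4)])

lemma dualJ_eq_scaleR_iff:
  fixes c :: "'a::banach \<Rightarrow>\<^sub>L real"
  assumes uc: "uniformly_convex TYPE('a)" and us: "uniformly_smooth TYPE('a)"
    and nc: "norm c = 1" and t: "t \<ge> 0"
  shows "dualJ x = t *\<^sub>R c \<longleftrightarrow> x = t *\<^sub>R dualJinv c"
proof
  assume J: "dualJ x = t *\<^sub>R c"
  show "x = t *\<^sub>R dualJinv c"
  proof (cases "t = 0")
    case True
    then show ?thesis
      using J norm_dualJ[OF us, of x] by simp
  next
    case False
    then have "dualJ ((1 / t) *\<^sub>R x) = c"
      using J t by (simp add: dualJ_scaleR[OF us])
    then have "dualJinv c = (1 / t) *\<^sub>R x"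
      by (rule dualJinv_eqI[OF uc us nc])
    then show ?thesis
      using False by simp
  qed
next
  assume "x = t *\<^sub>R dualJinv c"
  then show "dualJ x = t *\<^sub>R c"
    using t by (simp add: dualJ_scaleR[OF us] dualJ_dualJinv[OF uc us nc])
qed


subsection \<open>Polar cones\<close>

lemma norm_le_dist_cone_iff:
  fixes K :: "'a::real_normed_vector set"
  assumes us: "uniformly_smooth TYPE('a)" and "cone K"
  shows "(\<forall>k\<in>K. norm x \<le> norm (x - k)) \<longleftrightarrow> (\<forall>k\<in>K. blinfun_apply (dualJ x) k \<le> 0)"
proof
  assume "\<forall>k\<in>K. norm x \<le> norm (x - k)"
  then show "\<forall>k\<in>K. blinfun_apply (dualJ x) k \<le> 0"
    using \<open>cone K\<close> by (auto intro!: dualJ_nonpos_if_norm_le[OF us] simp: mem_cone)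
next
  assume nonpos: "\<forall>k\<in>K. blinfun_apply (dualJ x) k \<le> 0"
  show "\<forall>k\<in>K. norm x \<le> norm (x - k)"
  proof
    fix k
    assume "k \<in> K"
    have "norm x * norm x = blinfun_apply (dualJ x) x"
      by (simp add: dualJ_apply_self[OF us] power2_eq_square)
    also have "\<dots> \<le> blinfun_apply (dualJ x) (x - k)"
      using nonpos \<open>k \<in> K\<close> by (simp add: blinfun.diff_right)
    also have "\<dots> \<le> norm x * norm (x - k)"
      using norm_blinfun[of "dualJ x" "x - k"] by (simp add: norm_dualJ[OF us])
    finally show "norm x \<le> norm (x - k)"
      by (cases "x = 0") simp_all
  qed
qed

lemma polar_cone_eq:
  fixes K :: "'a::banach set"
  assumes uc: "uniformly_convex TYPE('a)" and us: "uniformly_smooth TYPE('a)"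
    and "closed K" "convex K" "cone K" "K \<noteq> {}"
  shows "polar_cone K = {x. \<forall>k\<in>K. blinfun_apply (dualJ x) k \<le> 0}"
proof -
  have "0 \<in> K"
    using \<open>cone K\<close> \<open>K \<noteq> {}\<close> cone_contains_0 by blast
  then have "metric_proj K x = 0 \<longleftrightarrow> (\<forall>k\<in>K. norm x \<le> norm (x - k))" for x
    using metric_proj_eq_iff[OF uc \<open>closed K\<close> \<open>convex K\<close> \<open>K \<noteq> {}\<close>] by simp
  then show ?thesis
    by (auto simp: polar_cone_def norm_le_dist_cone_iff[OF us \<open>cone K\<close>])
qed


subsection \<open>Meridian arcs and wedges\<close>

lemma endpoints_mem_meridian_arc:
  "(1 / norm a) *\<^sub>R a \<in> meridian_arc a b" "(1 / norm b) *\<^sub>R b \<in> meridian_arc a b"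
  unfolding meridian_arc_def
  by (intro CollectI exI[of _ 1] exI[of _ 0]; simp) (intro CollectI exI[of _ 0] exI[of _ 1]; simp)

lemma norm_meridian_arc:
  fixes a b :: "'a::real_normed_vector \<Rightarrow>\<^sub>L real"
  assumes "a \<noteq> 0" "\<And>s. b \<noteq> s *\<^sub>R a" and "c \<in> meridian_arc a b"
  shows "norm c = 1"
  using assms scaleR_add_scaleR_neq_0[OF assms(1,2)] by (auto simp: meridian_arc_def)

lemma cone_hull_meridian_arc:
  fixes a b :: "'a::real_normed_vector \<Rightarrow>\<^sub>L real"
  assumes "a \<noteq> 0" "\<And>s. b \<noteq> s *\<^sub>R a"
  shows "cone_hull_of (meridian_arc a b) = {l *\<^sub>R a + m *\<^sub>R b | l m. l \<ge> 0 \<and> m \<ge> 0}"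
proof (intro set_eqI iffI)
  fix f
  assume "f \<in> cone_hull_of (meridian_arc a b)"
  then obtain t l m where "t \<ge> 0" "l \<ge> 0" "m \<ge> 0"
    and f: "f = t *\<^sub>R ((1 / norm (l *\<^sub>R a + m *\<^sub>R b)) *\<^sub>R (l *\<^sub>R a + m *\<^sub>R b))"
    by (auto simp: cone_hull_of_def meridian_arc_def)
  then have "f = (t / norm (l *\<^sub>R a + m *\<^sub>R b) * l) *\<^sub>R a + (t / norm (l *\<^sub>R a + m *\<^sub>R b) * m) *\<^sub>R b"
    by (simp add: scaleR_add_right)
  then show "f \<in> {l *\<^sub>R a + m *\<^sub>R b | l m. l \<ge> 0 \<and> m \<ge> 0}"
    using \<open>t \<ge> 0\<close> \<open>l \<ge> 0\<close> \<open>m \<ge> 0\<close> by fastforce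
next
  fix f
  assume "f \<in> {l *\<^sub>R a + m *\<^sub>R b | l m. l \<ge> 0 \<and> m \<ge> 0}"
  then obtain l m where lm: "l \<ge> 0" "m \<ge> 0" and f: "f = l *\<^sub>R a + m *\<^sub>R b"
    by blast
  show "f \<in> cone_hull_of (meridian_arc a b)"
  proof (cases "(l, m) = (0, 0)")
    case True
    have "(1 / norm a) *\<^sub>R a \<in> meridian_arc a b"
      by (rule endpoints_mem_meridian_arc)
    then show ?thesis
      using True f unfolding cone_hull_of_def by (intro CollectI exI[of _ 0] exI[of _ "(1 / norm a) *\<^sub>R a"]) auto
  next
    case False
    let ?n = "norm (l *\<^sub>R a + m *\<^sub>R b)"
    have "?n > 0"
      using scaleR_add_scaleR_neq_0[OF assms False] by simp
    moreover have "(1 / ?n) *\<^sub>R (l *\<^sub>R a + m *\<^sub>R b) \<in> meridian_arc a b"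
      using lm False unfolding meridian_arc_def by blast
    ultimately show ?thesis
      unfolding cone_hull_of_def f
      by (intro CollectI exI[of _ ?n] exI[of _ "(1 / ?n) *\<^sub>R (l *\<^sub>R a + m *\<^sub>R b)"]) auto
  qed
qed

lemma wedge_eq_Int_halfspaces:
  fixes a b :: "'a::real_normed_vector \<Rightarrow>\<^sub>L real"
  shows "wedge a b = {x. blinfun_apply a x \<le> 0 \<and> blinfun_apply b x \<le> 0}"
proof (intro set_eqI iffI)
  fix x
  assume x: "x \<in> wedge a b"
  have "blinfun_apply c x \<le> 0" if "c \<in> {a, b}" for c
  proof -
    have "(1 / norm c) *\<^sub>R c \<in> meridian_arc a b"
      using that endpoints_mem_meridian_arc by blast
    then have "blinfun_apply ((1 / norm c) *\<^sub>R c) x \<le> 0"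
      using x by (simp add: wedge_def)
    then have "blinfun_apply c x / norm c \<le> 0"
      by (simp add: blinfun.scaleR_left)
    then show ?thesis
      by (cases "c = 0") (simp_all add: divide_le_0_iff)
  qed
  then show "x \<in> {x. blinfun_apply a x \<le> 0 \<and> blinfun_apply b x \<le> 0}"
    by simp
next
  fix x
  assume x: "x \<in> {x. blinfun_apply a x \<le> 0 \<and> blinfun_apply b x \<le> 0}"
  have "blinfun_apply c x \<le> 0" if arc: "c \<in> meridian_arc a b" for c
  proof -
    obtain l m where "l \<ge> 0" "m \<ge> 0"
      and c: "c = (1 / norm (l *\<^sub>R a + m *\<^sub>R b)) *\<^sub>R (l *\<^sub>R a + m *\<^sub>R b)"
      using arc by (auto simp: meridian_arc_def)
    then have "l * blinfun_apply a x + m * blinfun_apply b x \<le> 0"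
      using x by (simp add: add_nonpos_nonpos mult_nonneg_nonpos)
    then show ?thesis
      by (simp add: c blinfun.scaleR_left blinfun.add_left divide_nonpos_nonneg)
  qed
  then show "x \<in> wedge a b"
    by (simp add: wedge_def)
qed

lemma wedge_closed_convex_cone:
  fixes a b :: "'a::real_normed_vector \<Rightarrow>\<^sub>L real"
  shows "closed (wedge a b)" "convex (wedge a b)" "cone (wedge a b)" "wedge a b \<noteq> {}"
proof -
  have eq: "wedge a b = blinfun_apply a -` {..0} \<inter> blinfun_apply b -` {..0}"
    by (auto simp: wedge_eq_Int_halfspaces)
  show "closed (wedge a b)" "convex (wedge a b)"
    unfolding eq by (intro closed_Int convex_Int closed_blinfun_vimage convex_blinfun_vimage; simp)+
  show "cone (wedge a b)"
    by (auto simp: cone_def wedge_eq_Int_halfspaces blinfun.scaleR_right mult_nonneg_nonpos)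
  have "0 \<in> wedge a b"
    by (simp add: wedge_eq_Int_halfspaces)
  then show "wedge a b \<noteq> {}"
    by blast
qed

lemma polar_cone_wedge:
  fixes a b :: "'a::banach \<Rightarrow>\<^sub>L real"
  assumes uc: "uniformly_convex TYPE('a)" and us: "uniformly_smooth TYPE('a)"
    and ab: "\<And>s. a \<noteq> s *\<^sub>R b" and ba: "\<And>s. b \<noteq> s *\<^sub>R a"
  shows "polar_cone (wedge a b) = {x. dualJ x \<in> cone_hull_of (meridian_arc a b)}"
proof -
  have "a \<noteq> 0"
    using ab[of 0] by simp
  have "(\<forall>k\<in>wedge a b. blinfun_apply (dualJ x) k \<le> 0) \<longleftrightarrow> dualJ x \<in> cone_hull_of (meridian_arc a b)" for x
    unfolding wedge_eq_Int_halfspaces cone_hull_meridian_arc[OF \<open>a \<noteq> 0\<close> ba]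
    using farkas_two_functionals[OF ab ba, of "dualJ x"] by auto
  then show ?thesis
    by (simp add: polar_cone_eq[OF uc us wedge_closed_convex_cone])
qed

lemma dualJ_mem_cone_hull_iff:
  fixes C :: "('a::banach \<Rightarrow>\<^sub>L real) set"
  assumes uc: "uniformly_convex TYPE('a)" and us: "uniformly_smooth TYPE('a)"
    and unit: "\<And>c. c \<in> C \<Longrightarrow> norm c = 1"
  shows "dualJ x \<in> cone_hull_of C \<longleftrightarrow> x \<in> (\<Union>c\<in>C. {t *\<^sub>R dualJinv c | t. t \<ge> 0})"
proof -
  have "dualJ x \<in> cone_hull_of C \<longleftrightarrow> (\<exists>c\<in>C. \<exists>t\<ge>0. dualJ x = t *\<^sub>R c)"
    by (auto simp: cone_hull_of_def)
  also have "\<dots> \<longleftrightarrow> (\<exists>c\<in>C. \<exists>t\<ge>0. x = t *\<^sub>R dualJinv c)"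
    using dualJ_eq_scaleR_iff[OF uc us unit] by (intro bex_cong refl) blast
  also have "\<dots> \<longleftrightarrow> x \<in> (\<Union>c\<in>C. {t *\<^sub>R dualJinv c | t. t \<ge> 0})"
    by blast
  finally show ?thesis .
qed

theorem mainTheorem5:
  fixes a b :: "'a::banach \<Rightarrow>\<^sub>L real"
  assumes "uniformly_convex TYPE('a)"
    and "uniformly_smooth TYPE('a)"
    and "norm a = 1" and "norm b = 1"
    and "b \<noteq> a" and "b \<noteq> - a"
  shows "polar_cone (wedge a b) = (\<Union>c \<in> meridian_arc a b. {t *\<^sub>R dualJinv c | t. t \<ge> 0})
       \<and> (\<Union>c \<in> meridian_arc a b. {t *\<^sub>R dualJinv c | t. t \<ge> 0})
           = cone_hull_of (dualJinv ` meridian_arc a b)"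
proof -
  note uc = assms(1) and us = assms(2)
  have ba: "b \<noteq> s *\<^sub>R a" for s
    by (rule unit_neq_scaleR[OF assms(3-6)])
  have "a \<noteq> b" "a \<noteq> - b"
    using assms(5,6) by (metis, metis minus_minus)
  then have ab: "a \<noteq> s *\<^sub>R b" for s
    by (rule unit_neq_scaleR[OF assms(4,3)])
  have "a \<noteq> 0"
    using assms(3) by auto
  have "polar_cone (wedge a b) = {x. dualJ x \<in> cone_hull_of (meridian_arc a b)}"
    by (rule polar_cone_wedge[OF uc us ab ba])
  also have "\<dots> = (\<Union>c \<in> meridian_arc a b. {t *\<^sub>R dualJinv c | t. t \<ge> 0})"
    using dualJ_mem_cone_hull_iff[OF uc us norm_meridian_arc[OF \<open>a \<noteq> 0\<close> ba]] by blast
  moreover have "\<dots> = cone_hull_of (dualJinv ` meridian_arc a b)"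
    by (auto simp: cone_hull_of_def)
  ultimately show ?thesis
    by blast
qed

end
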